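(* Let $p$ be a binary word of length $l$ with $r$ runs, of which $r_1$ have size $1$. For every $n\ge0$, $$B_{n,p}(2)=\begin{cases} r_1\binom{n-r}{l-r+1} & \text{if } l\ge 2,\\[2pt] \binom{n}{2} & \text{if } l=1.\end{cases}$$
   Context: $c_p(w)$ is the number of occurrences of $p$ as a (not necessarily consecutive) subsequence of the binary word $w$; $B_{n,p}(k)$ is the number of binary words $w$ of length $n$ with $c_p(w)=k$. A run is a maximal block of consecutive equal letters; its size is its length; $r_i$ denotes the number of runs of $p$ of size $i$. Convention: $\binom{a}{b}=0$ unless $0\le b\le a$. *)

theory Defs
  imports Main
begin

definition occ :: "bool list \<Rightarrow> bool list \<Rightarrow> nat" where
  "occ p w = card {I. I \<subseteq> {0..<length w} \<and> card I = length p \<and> nths w I = p}"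

definition B :: "nat \<Rightarrow> bool list \<Rightarrow> nat \<Rightarrow> nat" where
  "B n p k = card {w :: bool list. length w = n \<and> occ p w = k}"

text \<open>Run decomposition: list of (letter, size) of maximal blocks, left to right.\<close>
fun runs :: "bool list \<Rightarrow> (bool \<times> nat) list" where
  "runs [] = []"
| "runs (x # xs) = (case runs xs of
      [] \<Rightarrow> [(x, 1)]
    | (y, k) # rs \<Rightarrow> (if x = y then (y, Suc k) # rs else (x, 1) # (y, k) # rs))"

definition num_runs :: "bool list \<Rightarrow> nat" where
  "num_runs p = length (runs p)"

definition runs_of_size :: "bool list \<Rightarrow> nat \<Rightarrow> nat" where
  "runs_of_size p i = length (filter (\<lambda>(a, k). k = i) (runs p))"

end

theory Submission
  imports Defs
begin

text \<open>
  Split a word by its first letter: for \<open>p = x # q\<close> we have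
  \<open>c\<^sub>p (y # u) = c\<^sub>p u + [y = x] c\<^sub>q u\<close>, and \<open>c\<^sub>q u > 0\<close> whenever \<open>c\<^sub>p u > 0\<close>.
  So a word with \<open>c\<^sub>p = k \<ge> 1\<close> consists of letters \<open>\<not> x\<close>, then \<open>x\<close>, then a word \<open>u\<close> with
  \<open>c\<^sub>p u + c\<^sub>q u = k\<close>: for \<open>k = 1\<close> this means \<open>(c\<^sub>p u, c\<^sub>q u) = (0, 1)\<close>, for \<open>k = 2\<close> it is
  \<open>(0, 2)\<close> or \<open>(1, 1)\<close>. These joint counts are computed by induction on \<open>q\<close>; each is a
  binomial coefficient in \<open>n - r\<close> with lower index \<open>l - r\<close>, and summing over the position of
  the first \<open>x\<close> (hockey stick) raises the lower index by one. Words of type \<open>(1, 1)\<close> exist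
  only when the first run of \<open>p\<close> is a singleton, and those of type \<open>(0, 2)\<close> contribute one
  term for each later singleton run; together they give the factor \<open>r\<^sub>1\<close>.
\<close>

section \<open>Counting occurrences of subsequences\<close>

fun subseq_count :: "'a list \<Rightarrow> 'a list \<Rightarrow> nat" where
  "subseq_count [] w = 1"
| "subseq_count (x # p) [] = 0"
| "subseq_count (x # p) (y # w) =
     subseq_count (x # p) w + (if x = y then subseq_count p w else 0)"

definition subseq_embeddings :: "'a list \<Rightarrow> 'a list \<Rightarrow> nat set set" where
  "subseq_embeddings p w = {I. I \<subseteq> {0..<length w} \<and> card I = length p \<and> nths w I = p}"

lemma finite_subseq_embeddings: "finite (subseq_embeddings p w)"
  unfolding subseq_embeddings_def by (rule finite_subset[of _ "Pow {0..<length w}"]) auto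

lemma subseq_embeddings_Nil: "subseq_embeddings [] w = {{}}"
  unfolding subseq_embeddings_def using finite_subset by fastforce

lemma subseq_embeddings_Cons_Nil: "subseq_embeddings (x # p) [] = {}"
  unfolding subseq_embeddings_def by auto

lemma Suc_preimage_Suc_image [simp]: "{j. Suc j \<in> Suc ` J} = J"
  by auto

lemma Suc_preimage_insert_0 [simp]: "{j. Suc j \<in> insert 0 (Suc ` J)} = J"
  by auto

lemma insert_0_Suc_image_preimage: "0 \<in> I \<Longrightarrow> insert 0 (Suc ` {j. Suc j \<in> I}) = I"
  by (auto simp: image_iff) (metis not0_implies_Suc)

lemma Suc_image_preimage: "0 \<notin> I \<Longrightarrow> Suc ` {j. Suc j \<in> I} = I"
  by (auto simp: image_iff) (metis not0_implies_Suc)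

lemma nths_Cons_Suc_image [simp]: "nths (y # w) (Suc ` J) = nths w J"
  by (simp add: nths_Cons)

lemma nths_Cons_insert_0 [simp]: "nths (y # w) (insert 0 (Suc ` J)) = y # nths w J"
  by (simp add: nths_Cons)

lemma Suc_image_in_subseq_embeddings:
  "J \<in> subseq_embeddings p w \<Longrightarrow> Suc ` J \<in> subseq_embeddings p (y # w)"
  unfolding subseq_embeddings_def by (auto simp: card_image)

lemma insert_0_in_subseq_embeddings:
  assumes "J \<in> subseq_embeddings p w"
  shows "insert 0 (Suc ` J) \<in> subseq_embeddings (y # p) (y # w)"
proof -
  have "finite J"
    using assms finite_subset unfolding subseq_embeddings_def by blast
  then show ?thesis
    using assms unfolding subseq_embeddings_def by (auto simp: card_image)
qed

lemma subseq_embeddings_Cons_Cons: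
  "subseq_embeddings (x # p) (y # w) =
     image Suc ` subseq_embeddings (x # p) w \<union>
     (if x = y then (\<lambda>J. insert 0 (Suc ` J)) ` subseq_embeddings p w else {})"
  (is "?L = ?R")
proof (intro equalityI subsetI)
  fix I assume "I \<in> ?L"
  then have I: "I \<subseteq> {0..<Suc (length w)}" "card I = Suc (length p)" "nths (y # w) I = x # p"
    unfolding subseq_embeddings_def by auto
  define J where "J = {j. Suc j \<in> I}"
  have J_sub: "J \<subseteq> {0..<length w}"
    using I(1) unfolding J_def by auto
  then have "finite J"
    by (rule finite_subset) simp
  show "I \<in> ?R"
  proof (cases "0 \<in> I")
    case True
    then have I_eq: "I = insert 0 (Suc ` J)"
      unfolding J_def by (rule insert_0_Suc_image_preimage[symmetric])
    then have "card J = length p"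
      using I(2) \<open>finite J\<close> by (simp add: card_image)
    moreover have "x = y" "nths w J = p"
      using I(3) I_eq by auto
    ultimately have "J \<in> subseq_embeddings p w"
      using J_sub unfolding subseq_embeddings_def by simp
    then show ?thesis
      using I_eq \<open>x = y\<close> by simp
  next
    case False
    then have I_eq: "I = Suc ` J"
      unfolding J_def by (rule Suc_image_preimage[symmetric])
    then have "J \<in> subseq_embeddings (x # p) w"
      using I J_sub unfolding subseq_embeddings_def by (simp add: card_image)
    then show ?thesis
      using I_eq by simp
  qed
next
  fix I assume "I \<in> ?R"
  then show "I \<in> ?L"
    using Suc_image_in_subseq_embeddings insert_0_in_subseq_embeddings
    by (auto split: if_splits)
qed

lemma card_subseq_embeddings: "card (subseq_embeddings p w) = subseq_count p w"
proof (induction w arbitrary: p)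
  case Nil
  then show ?case by (cases p) (auto simp: subseq_embeddings_Nil subseq_embeddings_Cons_Nil)
next
  case (Cons y w)
  show ?case
  proof (cases p)
    case Nil
    then show ?thesis by (simp add: subseq_embeddings_Nil)
  next
    case (Cons x p')
    have inj_Suc: "inj_on (image Suc) A" for A :: "nat set set"
      by (rule inj_on_inverseI[where g = "\<lambda>I. {j. Suc j \<in> I}"]) simp
    have inj_insert: "inj_on (\<lambda>J. insert 0 (Suc ` J)) A" for A :: "nat set set"
      by (rule inj_on_inverseI[where g = "\<lambda>I. {j. Suc j \<in> I}"]) simp
    have disjoint: "image Suc ` A \<inter> (\<lambda>J. insert 0 (Suc ` J)) ` B = {}" for A B :: "nat set set"
      by auto
    have "card (image Suc ` subseq_embeddings p w) = subseq_count p w" for p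
      using Cons.IH by (simp add: card_image[OF inj_Suc])
    moreover have "card ((\<lambda>J. insert 0 (Suc ` J)) ` subseq_embeddings p w) = subseq_count p w" for p
      using Cons.IH by (simp add: card_image[OF inj_insert])
    ultimately show ?thesis
      unfolding Cons subseq_embeddings_Cons_Cons
      by (simp add: card_Un_disjoint[OF _ _ disjoint] finite_subseq_embeddings)
  qed
qed

lemma occ_eq_subseq_count: "occ p w = subseq_count p w"
  unfolding occ_def card_subseq_embeddings[symmetric] subseq_embeddings_def ..

lemma subseq_count_le_Cons: "subseq_count q u \<le> subseq_count q (z # u)"
  by (cases q) auto

lemma subseq_count_tl_pos: "0 < subseq_count (x # q) u \<Longrightarrow> 0 < subseq_count q u"
proof (induction u)
  case Nil
  then show ?case by simp
next
  case (Cons z u)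
  then show ?case
    using subseq_count_le_Cons[of q u z] by (auto split: if_splits)
qed

lemma subseq_count_Cons_eq_0: "subseq_count q u = 0 \<Longrightarrow> subseq_count (x # q) u = 0"
  using subseq_count_tl_pos[of x q u] by (cases "subseq_count (x # q) u") auto

lemma subseq_count_repeated_head:
  "subseq_count (x # q) u = 1 \<Longrightarrow> subseq_count (x # x # q) u = 0"
proof (induction u)
  case Nil
  then show ?case by simp
next
  case (Cons z u)
  show ?case
  proof (cases "z = x")
    case True
    then have "subseq_count (x # q) u + subseq_count q u = 1"
      using Cons.prems by simp
    then have "subseq_count (x # q) u = 0"
      using subseq_count_tl_pos[of x q u] by linarith
    then show ?thesis
      using True subseq_count_Cons_eq_0 by simp
  next
    case False
    then show ?thesis using Cons by simp
  qed
qed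

lemma subseq_count_Cons_add_eq_1:
  "subseq_count (x # q) u + subseq_count q u = 1 \<longleftrightarrow>
     subseq_count (x # q) u = 0 \<and> subseq_count q u = 1"
  using subseq_count_tl_pos[of x q u] by (cases "subseq_count (x # q) u") auto

lemma subseq_count_Cons_add_eq_2:
  "subseq_count (x # q) u + subseq_count q u = 2 \<longleftrightarrow>
     subseq_count (x # q) u = 0 \<and> subseq_count q u = 2 \<or>
     subseq_count (x # q) u = 1 \<and> subseq_count q u = 1"
  using subseq_count_tl_pos[of x q u] by (cases "subseq_count (x # q) u") auto

section \<open>Counting binary words\<close>

definition count_words :: "nat \<Rightarrow> (bool list \<Rightarrow> bool) \<Rightarrow> nat" where
  "count_words n P = card {w. length w = n \<and> P w}"

lemma finite_words_of_length: "finite {w :: bool list. length w = n \<and> P w}"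
  by (rule finite_subset[OF _ finite_lists_length_eq[of "UNIV :: bool set" n]]) auto

lemma count_words_0: "count_words 0 P = (if P [] then 1 else 0)"
proof -
  have "{w :: bool list. length w = 0 \<and> P w} = (if P [] then {[]} else {})"
    by auto
  then show ?thesis unfolding count_words_def by simp
qed

lemma count_words_Suc:
  "count_words (Suc n) P = count_words n (\<lambda>u. P (x # u)) + count_words n (\<lambda>u. P ((\<not> x) # u))"
proof -
  let ?A = "Cons x ` {u. length u = n \<and> P (x # u)}"
  let ?B = "Cons (\<not> x) ` {u. length u = n \<and> P ((\<not> x) # u)}"
  have "{w. length w = Suc n \<and> P w} = ?A \<union> ?B"
  proof (intro equalityI subsetI)
    fix w assume "w \<in> {w. length w = Suc n \<and> P w}"
    then obtain z u where "w = z # u" "length u = n" "P (z # u)"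
      by (cases w) auto
    then show "w \<in> ?A \<union> ?B"
      by (cases "z = x") auto
  qed auto
  moreover have "card (?A \<union> ?B) = card ?A + card ?B"
    by (rule card_Un_disjoint) (auto simp: finite_words_of_length)
  ultimately show ?thesis
    unfolding count_words_def by (simp add: card_image)
qed

lemma count_words_cong:
  "(\<And>u. length u = n \<Longrightarrow> P u = Q u) \<Longrightarrow> count_words n P = count_words n Q"
  unfolding count_words_def by (rule arg_cong[where f = card]) auto

lemma count_words_eq_0: "(\<And>u. \<not> P u) \<Longrightarrow> count_words n P = 0"
  unfolding count_words_def by simp

lemma count_words_disj:
  assumes "\<And>u. \<not> (P u \<and> Q u)"
  shows "count_words n (\<lambda>u. P u \<or> Q u) = count_words n P + count_words n Q"
proof -
  have "{w. length w = n \<and> (P w \<or> Q w)} = {w. length w = n \<and> P w} \<union> {w. length w = n \<and> Q w}"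
    by auto
  then show ?thesis
    unfolding count_words_def using assms
    by (simp add: card_Un_disjoint finite_words_of_length disjoint_iff)
qed

lemma count_words_Suc_forced:
  assumes "\<And>u. \<not> P (x # u)" and "y \<noteq> x"
  shows "count_words (Suc n) P = count_words n (\<lambda>u. P (y # u))"
proof -
  have "y = (\<not> x)"
    using assms(2) by auto
  then show ?thesis
    using count_words_Suc[of n P x] count_words_eq_0[of "\<lambda>u. P (x # u)"] assms(1) by simp
qed

text \<open>A word in \<open>P\<close> of length \<open>n\<close> is \<open>(\<not> x)\<^bsup>n-1-i\<^esup> x u\<close> with \<open>u\<close> of length \<open>i\<close>.\<close>

lemma count_words_prefix_sum:
  assumes "\<And>u. P ((\<not> x) # u) = P u" and "\<not> P []"
  shows "count_words n P = (\<Sum>i<n. count_words i (\<lambda>u. P (x # u)))"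
proof (induction n)
  case 0
  then show ?case using assms(2) by (simp add: count_words_0)
next
  case (Suc n)
  then show ?case
    using count_words_Suc[of n P x] assms(1) by simp
qed

lemma count_words_letter: "count_words n (\<lambda>u. subseq_count [x] u = k) = n choose k"
proof (induction n arbitrary: k)
  case 0
  then show ?case by (simp add: count_words_0)
next
  case (Suc n)
  have "count_words n (\<lambda>u. subseq_count [x] (x # u) = k) = (case k of 0 \<Rightarrow> 0 | Suc j \<Rightarrow> n choose j)"
    using Suc.IH by (cases k) (simp_all add: count_words_eq_0)
  then show ?case
    using count_words_Suc[of n _ x] Suc.IH by (cases k) simp_all
qed

lemma sum_shifted_choose:
  "(\<Sum>i<n. if r \<le> i then (i - r) choose k else 0) = (n - r) choose Suc k"
proof (induction n)
  case 0
  then show ?case by simp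
next
  case (Suc n)
  then show ?case
    by (cases "r \<le> n") (simp_all add: Suc_diff_le)
qed

lemma sum_shifted_choose_Suc:
  assumes "0 < r"
  shows "(\<Sum>i<n. if r \<le> Suc i then (Suc i - r) choose k else 0) = (Suc n - r) choose Suc k"
proof -
  have "(if r \<le> Suc i then (Suc i - r) choose k else 0) =
      (if r - 1 \<le> i then (i - (r - 1)) choose k else 0)" for i
    using assms by (simp add: Suc_diff_le le_diff_conv)
  then show ?thesis
    using sum_shifted_choose[where n = n and r = "r - 1" and k = k] assms by simp
qed

section \<open>Run statistics\<close>

definition first_run_length :: "bool list \<Rightarrow> nat" where
  "first_run_length p = snd (hd (runs p))"

definition later_singleton_runs :: "bool list \<Rightarrow> nat" where
  "later_singleton_runs p = length (filter (\<lambda>(a, k). k = 1) (tl (runs p)))"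

definition num_repeats :: "bool list \<Rightarrow> nat" where
  "num_repeats p = length p - num_runs p"

lemma runs_Cons: "\<exists>k rs. runs (x # q) = (x, Suc k) # rs"
  by (auto split: list.split)

lemma runs_Cons_Cons_same:
  "runs (x # x # q) = (x, Suc (first_run_length (x # q))) # tl (runs (x # q))"
proof -
  obtain k rs where "runs (x # q) = (x, Suc k) # rs"
    using runs_Cons by blast
  then show ?thesis
    unfolding first_run_length_def by (subst runs.simps) simp
qed

lemma runs_Cons_Cons_diff: "y \<noteq> x \<Longrightarrow> runs (x # y # q) = (x, 1) # runs (y # q)"
proof -
  assume "y \<noteq> x"
  moreover obtain k rs where "runs (y # q) = (y, Suc k) # rs"
    using runs_Cons by blast
  ultimately show ?thesis
    by (subst runs.simps) simp
qed

lemma num_runs_le_length: "num_runs p \<le> length p"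
  by (induction p) (auto simp: num_runs_def split: list.split)

lemma num_runs_Cons_pos: "0 < num_runs (x # q)"
  using runs_Cons[of x q] by (auto simp: num_runs_def)

lemma first_run_length_Cons_pos: "0 < first_run_length (x # q)"
  using runs_Cons[of x q] by (auto simp: first_run_length_def)

lemma runs_of_size_1_Cons:
  "runs_of_size (x # q) 1 = later_singleton_runs (x # q) + (if first_run_length (x # q) = 1 then 1 else 0)"
proof -
  obtain k rs where "runs (x # q) = (x, Suc k) # rs"
    using runs_Cons by blast
  then show ?thesis
    unfolding runs_of_size_def later_singleton_runs_def first_run_length_def by simp
qed

lemma run_statistics_singleton [simp]:
  "num_runs [x] = 1" "num_repeats [x] = 0" "first_run_length [x] = 1" "later_singleton_runs [x] = 0"
  by (simp_all add: num_runs_def num_repeats_def first_run_length_def later_singleton_runs_def)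

lemma run_statistics_Cons_Cons_same [simp]:
  "num_runs (x # x # q) = num_runs (x # q)"
  "num_repeats (x # x # q) = Suc (num_repeats (x # q))"
  "first_run_length (x # x # q) = Suc (first_run_length (x # q))"
  "later_singleton_runs (x # x # q) = later_singleton_runs (x # q)"
  using runs_Cons[of x q] num_runs_le_length[of "x # q"]
  by (auto simp: runs_Cons_Cons_same num_runs_def num_repeats_def first_run_length_def
      later_singleton_runs_def)

lemma run_statistics_Cons_Cons_diff [simp]:
  assumes "y \<noteq> x"
  shows "num_runs (x # y # q) = Suc (num_runs (y # q))"
    "num_repeats (x # y # q) = num_repeats (y # q)"
    "first_run_length (x # y # q) = 1"
    "later_singleton_runs (x # y # q) = runs_of_size (y # q) 1"
  using runs_Cons_Cons_diff[OF assms]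
  by (simp_all add: num_runs_def num_repeats_def first_run_length_def later_singleton_runs_def
      runs_of_size_def)

section \<open>Words with one or two occurrences\<close>

lemma count_once_eq_sum:
  "count_words n (\<lambda>u. subseq_count (x # q) u = 1) =
     (\<Sum>i<n. count_words i (\<lambda>u. subseq_count (x # q) u = 0 \<and> subseq_count q u = 1))"
  using count_words_prefix_sum[where x = x and P = "\<lambda>u. subseq_count (x # q) u = 1"]
  by (simp add: subseq_count_Cons_add_eq_1 del: One_nat_def)

lemma count_avoiding_Cons_once:
  "count_words n (\<lambda>u. subseq_count (x # q) u = 0 \<and> subseq_count q u = 1) =
     (if num_runs (x # q) \<le> Suc n
      then (Suc n - num_runs (x # q)) choose num_repeats (x # q) else 0)"
proof (induction q arbitrary: x n)
  case Nil
  show ?case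
    using count_words_letter[of n x 0] by simp
next
  case (Cons z q)
  show ?case
  proof (cases "z = x")
    case True
    have "count_words n (\<lambda>u. subseq_count (x # x # q) u = 0 \<and> subseq_count (x # q) u = 1) =
        count_words n (\<lambda>u. subseq_count (x # q) u = 1)"
      by (rule count_words_cong) (auto simp del: One_nat_def dest: subseq_count_repeated_head)
    also have "\<dots> = (\<Sum>i<n. if num_runs (x # q) \<le> Suc i
        then (Suc i - num_runs (x # q)) choose num_repeats (x # q) else 0)"
      by (simp only: count_once_eq_sum Cons.IH)
    also have "\<dots> = (Suc n - num_runs (x # q)) choose Suc (num_repeats (x # q))"
      by (rule sum_shifted_choose_Suc[OF num_runs_Cons_pos])
    finally show ?thesis
      using True by simp
  next
    case False
    show ?thesis
    proof (cases n)
      case 0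
      then show ?thesis
        using False num_runs_Cons_pos[of z q] by (simp add: count_words_0)
    next
      case (Suc m)
      have "count_words (Suc m) (\<lambda>u. subseq_count (x # z # q) u = 0 \<and> subseq_count (z # q) u = 1) =
          count_words m (\<lambda>u. subseq_count (x # z # q) (z # u) = 0 \<and> subseq_count (z # q) (z # u) = 1)"
        by (rule count_words_Suc_forced[where x = x]) (use False in auto)
      also have "\<dots> = count_words m (\<lambda>u. subseq_count (z # q) u = 0 \<and> subseq_count q u = 1)"
        using False subseq_count_Cons_eq_0[of "z # q" _ x]
        by (intro count_words_cong) (auto simp: subseq_count_Cons_add_eq_1 simp del: One_nat_def)
      finally show ?thesis
        using Suc Cons.IH False by simp
    qed
  qed
qed

lemma count_avoiding_Cons_Cons_once_once:
  assumes "z \<noteq> x"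
  shows "count_words n (\<lambda>u. subseq_count (x # z # q) u = 0 \<and> subseq_count (z # q) u = 1 \<and>
      subseq_count q u = 1) =
    (if num_runs (z # q) \<le> n \<and> first_run_length (z # q) = 1
     then (n - num_runs (z # q)) choose num_repeats (z # q) else 0)"
proof (cases n)
  case 0
  then show ?thesis
    using num_runs_Cons_pos[of z q] by (simp add: count_words_0)
next
  case (Suc m)
  have forced: "count_words (Suc m) (\<lambda>u. subseq_count (x # z # q) u = 0 \<and>
        subseq_count (z # q) u = 1 \<and> subseq_count q u = 1) =
      count_words m (\<lambda>u. subseq_count (x # z # q) u = 0 \<and>
        subseq_count (z # q) u + subseq_count q u = 1 \<and> subseq_count q (z # u) = 1)"
  proof -
    have "\<not> (subseq_count (x # z # q) (x # u) = 0 \<and> subseq_count (z # q) (x # u) = 1)" for u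
      using assms by auto
    then show ?thesis
      using assms by (subst count_words_Suc_forced[where x = x and y = z]) auto
  qed
  show ?thesis
  proof (cases q)
    case Nil
    have "count_words m (\<lambda>u. subseq_count [x, z] u = 0 \<and> subseq_count [z] u = 0) =
        count_words m (\<lambda>u. subseq_count [z] u = 0)"
      by (rule count_words_cong) (auto intro: subseq_count_Cons_eq_0)
    then show ?thesis
      using forced Suc Nil count_words_letter[of m z 0] by simp
  next
    case (Cons w q')
    show ?thesis
    proof (cases "w = z")
      case True
      have "\<not> (subseq_count (z # q) u + subseq_count q u = 1 \<and> subseq_count q (z # u) = 1)" for u
        using subseq_count_tl_pos[of z q' u] Cons True
        by (auto simp: subseq_count_Cons_add_eq_1 simp del: One_nat_def)
      then show ?thesis
        using forced Suc Cons True first_run_length_Cons_pos[of z q'] count_words_eq_0 by auto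
    next
      case False
      then have "w = x"
        using assms by auto
      have "count_words m (\<lambda>u. subseq_count (x # z # q) u = 0 \<and>
          subseq_count (z # q) u + subseq_count q u = 1 \<and> subseq_count q (z # u) = 1) =
        count_words m (\<lambda>u. subseq_count (z # q) u = 0 \<and> subseq_count q u = 1)"
        using Cons \<open>w = x\<close> assms subseq_count_Cons_eq_0[of "z # q" _ x]
        by (intro count_words_cong) (auto simp: subseq_count_Cons_add_eq_1 simp del: One_nat_def)
      then show ?thesis
        using forced Suc Cons \<open>w = x\<close> assms count_avoiding_Cons_once[of m z q] by simp
    qed
  qed
qed

lemma count_once_once:
  assumes "q \<noteq> []"
  shows "count_words n (\<lambda>u. subseq_count (x # q) u = 1 \<and> subseq_count q u = 1) =
    (if num_runs (x # q) \<le> n \<and> first_run_length (x # q) = 1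
     then (n - num_runs (x # q)) choose num_repeats (x # q) else 0)"
proof -
  obtain z q' where q: "q = z # q'"
    using assms by (cases q) auto
  show ?thesis
  proof (cases "z = x")
    case True
    have "\<not> (subseq_count (x # q) u = 1 \<and> subseq_count q u = 1)" for u
      using subseq_count_repeated_head[of x q' u] q True by auto
    then show ?thesis
      using q True first_run_length_Cons_pos[of x q'] count_words_eq_0 by auto
  next
    case False
    show ?thesis
    proof (cases n)
      case 0
      then show ?thesis
        using num_runs_Cons_pos[of x q] by (simp add: count_words_0)
    next
      case (Suc m)
      have no_z_first: "\<not> (subseq_count (x # q) (z # u) = 1 \<and> subseq_count q (z # u) = 1)" for u
        using q False subseq_count_tl_pos[of x q u] subseq_count_tl_pos[of z q' u] by auto
      have "count_words (Suc m) (\<lambda>u. subseq_count (x # q) u = 1 \<and> subseq_count q u = 1) =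
          count_words m (\<lambda>u. subseq_count (x # q) (x # u) = 1 \<and> subseq_count q (x # u) = 1)"
        by (rule count_words_Suc_forced[where x = z]) (use no_z_first False in auto)
      also have "\<dots> = count_words m (\<lambda>u. subseq_count (x # q) u = 0 \<and> subseq_count q u = 1)"
        using q False by (simp add: subseq_count_Cons_add_eq_1 del: One_nat_def)
      finally show ?thesis
        using Suc q False count_avoiding_Cons_once[of m x q] by simp
    qed
  qed
qed

lemma count_avoiding_Cons_twice:
  "count_words n (\<lambda>u. subseq_count (x # q) u = 0 \<and> subseq_count q u = 2) =
     (if num_runs (x # q) \<le> n
      then later_singleton_runs (x # q) * ((n - num_runs (x # q)) choose num_repeats (x # q))
      else 0)"
proof (induction q arbitrary: x n)
  case Nil
  then show ?case by (simp add: count_words_eq_0)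
next
  case (Cons z q)
  show ?case
  proof (cases "z = x")
    case True
    let ?r = "num_runs (x # q)" and ?e = "num_repeats (x # q)"
    have "count_words n (\<lambda>u. subseq_count (x # x # q) u = 0 \<and> subseq_count (x # q) u = 2) =
        (\<Sum>i<n. count_words i (\<lambda>u. subseq_count (x # q) u = 0 \<and> subseq_count q u = 2))"
      using count_words_prefix_sum[where x = x and P = "\<lambda>u. subseq_count (x # x # q) u = 0 \<and>
          subseq_count (x # q) u = 2"]
      by (simp add: subseq_count_Cons_eq_0 conj_commute cong: conj_cong)
    also have "\<dots> = later_singleton_runs (x # q) * (\<Sum>i<n. if ?r \<le> i then (i - ?r) choose ?e else 0)"
      unfolding sum_distrib_left by (rule sum.cong) (simp_all add: Cons.IH)
    also have "\<dots> = later_singleton_runs (x # q) * ((n - ?r) choose Suc ?e)"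
      by (simp add: sum_shifted_choose)
    finally show ?thesis
      using True by simp
  next
    case False
    show ?thesis
    proof (cases n)
      case 0
      then show ?thesis
        using False num_runs_Cons_pos[of z q] by (simp add: count_words_0)
    next
      case (Suc m)
      have no_x_first: "\<not> (subseq_count (x # z # q) (x # u) = 0 \<and> subseq_count (z # q) (x # u) = 2)" for u
        using False by auto
      have "count_words (Suc m) (\<lambda>u. subseq_count (x # z # q) u = 0 \<and> subseq_count (z # q) u = 2) =
          count_words m (\<lambda>u. subseq_count (x # z # q) (z # u) = 0 \<and> subseq_count (z # q) (z # u) = 2)"
        by (rule count_words_Suc_forced[where x = x]) (use no_x_first False in auto)
      also have "\<dots> = count_words m (\<lambda>u. subseq_count (z # q) u = 0 \<and> subseq_count q u = 2 \<or>
          subseq_count (x # z # q) u = 0 \<and> subseq_count (z # q) u = 1 \<and> subseq_count q u = 1)"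
        using False subseq_count_Cons_eq_0[of "z # q" _ x]
        by (intro count_words_cong) (auto simp: subseq_count_Cons_add_eq_2)
      also have "\<dots> = count_words m (\<lambda>u. subseq_count (z # q) u = 0 \<and> subseq_count q u = 2) +
          count_words m (\<lambda>u. subseq_count (x # z # q) u = 0 \<and> subseq_count (z # q) u = 1 \<and>
            subseq_count q u = 1)"
        by (rule count_words_disj) auto
      finally show ?thesis
        using Suc run_statistics_Cons_Cons_diff[OF False] Cons.IH[of m z]
          count_avoiding_Cons_Cons_once_once[OF False, of m q]
        by (simp add: runs_of_size_1_Cons algebra_simps del: One_nat_def)
    qed
  qed
qed

lemma count_twice:
  assumes "q \<noteq> []"
  shows "count_words n (\<lambda>u. subseq_count (x # q) u = 2) =
    runs_of_size (x # q) 1 * ((n - num_runs (x # q)) choose Suc (num_repeats (x # q)))"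
proof -
  let ?r = "num_runs (x # q)" and ?e = "num_repeats (x # q)"
  have step: "count_words i (\<lambda>u. subseq_count (x # q) u + subseq_count q u = 2) =
      runs_of_size (x # q) 1 * (if ?r \<le> i then (i - ?r) choose ?e else 0)" for i
  proof -
    have "count_words i (\<lambda>u. subseq_count (x # q) u + subseq_count q u = 2) =
        count_words i (\<lambda>u. subseq_count (x # q) u = 0 \<and> subseq_count q u = 2) +
        count_words i (\<lambda>u. subseq_count (x # q) u = 1 \<and> subseq_count q u = 1)"
      unfolding subseq_count_Cons_add_eq_2 by (rule count_words_disj) auto
    then show ?thesis
      using count_avoiding_Cons_twice[of i x q] count_once_once[OF assms, of i x]
      by (simp add: runs_of_size_1_Cons algebra_simps del: One_nat_def)
  qed
  have "count_words n (\<lambda>u. subseq_count (x # q) u = 2) =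
      (\<Sum>i<n. count_words i (\<lambda>u. subseq_count (x # q) u + subseq_count q u = 2))"
    using count_words_prefix_sum[where x = x and P = "\<lambda>u. subseq_count (x # q) u = 2"] by simp
  also have "\<dots> = runs_of_size (x # q) 1 * (\<Sum>i<n. if ?r \<le> i then (i - ?r) choose ?e else 0)"
    by (simp only: step sum_distrib_left)
  also have "\<dots> = runs_of_size (x # q) 1 * ((n - ?r) choose Suc ?e)"
    by (simp only: sum_shifted_choose)
  finally show ?thesis .
qed

theorem mainTheorem3:
  fixes p :: "bool list" and n :: nat
  assumes "length p \<ge> 1"
  shows "B n p 2 =
    (if length p \<ge> 2
     then runs_of_size p 1 * ((n - num_runs p) choose (length p - num_runs p + 1))
     else n choose 2)"
proof -
  obtain x q where p: "p = x # q"
    using assms by (cases p) auto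
  have B_eq: "B n p 2 = count_words n (\<lambda>w. subseq_count p w = 2)"
    unfolding B_def count_words_def occ_eq_subseq_count ..
  show ?thesis
  proof (cases "q = []")
    case True
    then show ?thesis
      using B_eq p count_words_letter[of n x 2] by simp
  next
    case False
    then have "length p \<ge> 2"
      using p by (cases q) auto
    moreover have "length p - num_runs p + 1 = Suc (num_repeats p)"
      unfolding num_repeats_def by simp
    ultimately show ?thesis
      using B_eq p count_twice[OF False, of n x] by simp
  qed
qed

end
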